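(* Let $1\le m\le n$ be integers and $\sigma_1^2,\dots,\sigma_n^2>0$. The optimal value of the problem \[ \max_\eta\ \sum_{M\subset[n]:|M|=m}\Big(\sum_{l\in M}\eta_{M\setminus\{l\}}\sigma_l^2\Big)\,\mathrm{Ent}\big(\{\eta_{M\setminus\{l\}}\sigma_l^2\}_{l\in M}\big) \] subject to $\sum_{F\subset[n]:|F|=m-1}\eta_F=1$, $\eta_F\ge0$ for all $F\subset[n]$ with $|F|=m-1$, is at least $\frac13\sum_{j\in G^{m}}\sigma_j^2\ln(m)$.
   Context: For a nonnegative vector $a$, $\mathrm{Ent}(a)=-\sum_i\hat a_i\ln\hat a_i$ with $\hat a_i=a_i/\sum_ja_j$ and $0\ln 0=0$ (a term whose vector is identically zero contributes $0$). Let $\underline\sigma^2=\min_i\sigma_i^2$, $G_j=\{i\in[n]:2^{j-1}\le\sigma_i^2/\underline\sigma^2<2^j\}$ for $j=1,\dots,k$ covering $[n]$, and $G^{m}=\bigcup_{j:|G_j|>2m}G_j$. *)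

theory Defs
  imports Complex_Main
begin

definition Ent :: "'a set \<Rightarrow> ('a \<Rightarrow> real) \<Rightarrow> real" where
  "Ent I a = (let S = (\<Sum>j\<in>I. a j) in
     if S = 0 then 0
     else - (\<Sum>i\<in>I. if a i = 0 then 0 else (a i / S) * ln (a i / S)))"

definition sigmin :: "nat \<Rightarrow> (nat \<Rightarrow> real) \<Rightarrow> real" where
  "sigmin n s = Min (s ` {1..n})"

definition Grp :: "nat \<Rightarrow> (nat \<Rightarrow> real) \<Rightarrow> nat \<Rightarrow> nat set" where
  "Grp n s j = {i \<in> {1..n}. 2 ^ (j - 1) \<le> s i / sigmin n s \<and> s i / sigmin n s < 2 ^ j}"

definition Gbig :: "nat \<Rightarrow> (nat \<Rightarrow> real) \<Rightarrow> nat \<Rightarrow> nat set" where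
  "Gbig n s m = (\<Union>j \<in> {j. 1 \<le> j \<and> card (Grp n s j) > 2 * m}. Grp n s j)"

definition objective :: "nat \<Rightarrow> nat \<Rightarrow> (nat \<Rightarrow> real) \<Rightarrow> (nat set \<Rightarrow> real) \<Rightarrow> real" where
  "objective n m s \<eta> =
     (\<Sum>M \<in> {M. M \<subseteq> {1..n} \<and> card M = m}.
        (\<Sum>l\<in>M. \<eta> (M - {l}) * s l) * Ent M (\<lambda>l. \<eta> (M - {l}) * s l))"

definition feasible :: "nat \<Rightarrow> nat \<Rightarrow> (nat set \<Rightarrow> real) \<Rightarrow> bool" where
  "feasible n m \<eta> \<longleftrightarrow>
     (\<Sum>F \<in> {F. F \<subseteq> {1..n} \<and> card F = m - 1}. \<eta> F) = 1 \<and>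
     (\<forall>F. F \<subseteq> {1..n} \<and> card F = m - 1 \<longrightarrow> \<eta> F \<ge> 0)"

end

(* Write s_i = sigma_i^2, U = G^m and e_k = esym U k s (elementary symmetric polynomial).  Put
   weight eta_F = prod_F s / e_{m-1} on each (m-1)-subset F of U.  For every m-subset M of U the
   vector (eta_{M - {l}} s_l)_{l in M} is then constant, so its entropy is ln m and the objective
   is at least m e_m / e_{m-1} ln m.  Now m e_m = sum_F prod_F s (S - s(F)) with S = sum_U s, and
   sum_F prod_F s s(F) = sum_i s_i w_i, where w_i is the weight of the subsets containing i.  In a
   dyadic group of more than 2m indices the s_i agree up to a factor 2, and an exchange argument
   shows that the subsets containing i weigh at most twice as much as those avoiding i, so
   w_i <= 2/3 e_{m-1}.  Hence m e_m >= 1/3 e_{m-1} S. *)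

theory Submission
  imports Defs
begin

lemma Ent_nonneg:
  assumes "finite I" and nonneg: "\<And>i. i \<in> I \<Longrightarrow> 0 \<le> a i"
  shows "0 \<le> Ent I a"
proof (cases "sum a I = 0")
  case True
  then show ?thesis by (simp add: Ent_def)
next
  case False
  let ?S = "sum a I"
  have S_pos: "0 < ?S" using False sum_nonneg[of I a] nonneg by force
  have "(if a i = 0 then 0 else a i / ?S * ln (a i / ?S)) \<le> 0" if i: "i \<in> I" for i
  proof (cases "a i = 0")
    case False
    have "0 < a i" using False nonneg[OF i] by linarith
    moreover have "a i \<le> ?S" using member_le_sum[of i I a] i assms by auto
    ultimately have "ln (a i / ?S) \<le> 0" using S_pos by simp
    then have "a i / ?S * ln (a i / ?S) \<le> 0"
      using \<open>0 < a i\<close> S_pos by (intro mult_nonneg_nonpos) auto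
    then show ?thesis by simp
  qed simp
  then have "(\<Sum>i\<in>I. if a i = 0 then 0 else a i / ?S * ln (a i / ?S)) \<le> 0"
    by (rule sum_nonpos)
  then show ?thesis using False by (simp add: Ent_def Let_def)
qed

lemma mass_mult_Ent_nonneg:
  assumes "finite I" and "\<And>i. i \<in> I \<Longrightarrow> 0 \<le> a i"
  shows "0 \<le> sum a I * Ent I a"
  using assms by (simp add: sum_nonneg Ent_nonneg)

lemma Ent_cong:
  assumes "\<And>i. i \<in> I \<Longrightarrow> a i = b i"
  shows "Ent I a = Ent I b"
proof -
  have sums: "sum a I = sum b I" using assms by (rule sum.cong[OF refl])
  have terms: "(\<Sum>i\<in>I. if a i = 0 then 0 else a i / S * ln (a i / S)) =
      (\<Sum>i\<in>I. if b i = 0 then 0 else b i / S * ln (b i / S))" for S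
    using assms by (intro sum.cong) auto
  show ?thesis unfolding Ent_def Let_def sums terms ..
qed

lemma Ent_const:
  assumes "finite I" "I \<noteq> {}" "0 < c"
  shows "Ent I (\<lambda>_. c) = ln (real (card I))"
proof -
  have card_pos: "0 < card I" using assms by (simp add: card_gt_0_iff)
  have "c / (real (card I) * c) = 1 / real (card I)" using assms by simp
  then show ?thesis using assms card_pos by (simp add: Ent_def Let_def ln_div)
qed

definition esym :: "'a set \<Rightarrow> nat \<Rightarrow> ('a \<Rightarrow> 'b::comm_semiring_1) \<Rightarrow> 'b" where
  "esym U k s = (\<Sum>F\<in>{F. F \<subseteq> U \<and> card F = k}. prod s F)"

lemma finite_subsets_card:
  "finite U \<Longrightarrow> finite {F. F \<subseteq> U \<and> card F = k}"
  by (rule finite_subset[of _ "Pow U"]) auto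

lemma esym_pos:
  fixes s :: "'a \<Rightarrow> real"
  assumes "finite U" "k \<le> card U" and pos: "\<And>x. x \<in> U \<Longrightarrow> 0 < s x"
  shows "0 < esym U k s"
proof -
  obtain F where F: "F \<subseteq> U" "card F = k" using assms(2) by (rule obtain_subset_with_card_n)
  have "prod s F \<le> esym U k s"
    unfolding esym_def using F assms(1) pos
    by (intro member_le_sum finite_subsets_card prod_nonneg) (auto intro: less_imp_le)
  moreover have "0 < prod s F" using F pos by (intro prod_pos) auto
  ultimately show ?thesis by linarith
qed

lemma esym_split_mem:
  assumes "finite U"
  shows "esym U k s = (\<Sum>F\<in>{F. F \<subseteq> U \<and> card F = k \<and> i \<in> F}. prod s F)
    + (\<Sum>F\<in>{F. F \<subseteq> U \<and> card F = k \<and> i \<notin> F}. prod s F)"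
proof -
  let ?F = "{F. F \<subseteq> U \<and> card F = k}"
  have "esym U k s = (\<Sum>F\<in>?F \<inter> {F. i \<in> F}. prod s F) + (\<Sum>F\<in>?F - {F. i \<in> F}. prod s F)"
    unfolding esym_def using assms by (intro sum.Int_Diff finite_subsets_card)
  also have "?F \<inter> {F. i \<in> F} = {F. F \<subseteq> U \<and> card F = k \<and> i \<in> F}" by blast
  also have "?F - {F. i \<in> F} = {F. F \<subseteq> U \<and> card F = k \<and> i \<notin> F}" by blast
  finally show ?thesis .
qed

lemma of_nat_Suc_mult_esym_Suc:
  fixes s :: "'a \<Rightarrow> 'b::comm_semiring_1"
  assumes U: "finite U"
  shows "of_nat (Suc k) * esym U (Suc k) s =
    (\<Sum>F\<in>{F. F \<subseteq> U \<and> card F = k}. \<Sum>l\<in>U - F. prod s F * s l)"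
proof -
  let ?M = "{M. M \<subseteq> U \<and> card M = Suc k}" and ?F = "{F. F \<subseteq> U \<and> card F = k}"
  have "of_nat (Suc k) * esym U (Suc k) s = (\<Sum>M\<in>?M. \<Sum>l\<in>M. prod s M)"
    unfolding esym_def sum_distrib_left by (intro sum.cong) auto
  also have "\<dots> = (\<Sum>(M, l)\<in>Sigma ?M (\<lambda>M. M). prod s M)"
    using U by (intro sum.Sigma finite_subsets_card) (auto intro: finite_subset)
  also have "\<dots> = (\<Sum>(F, l)\<in>Sigma ?F (\<lambda>F. U - F). prod s F * s l)"
    using U
    by (intro sum.reindex_bij_witness[where i = "\<lambda>(F, l). (insert l F, l)" and j = "\<lambda>(M, l). (M - {l}, l)"])
      (auto simp: finite_subset prod.remove mult.commute card_Diff_singleton)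
  also have "\<dots> = (\<Sum>F\<in>?F. \<Sum>l\<in>U - F. prod s F * s l)"
    using U by (intro sum.Sigma[symmetric] finite_subsets_card) auto
  finally show ?thesis .
qed

lemma sum_subsets_exchange:
  assumes U: "finite U" and "i \<in> U" "G \<subseteq> U"
  shows "(\<Sum>F\<in>{F. F \<subseteq> U \<and> card F = k \<and> i \<in> F}. \<Sum>j\<in>G - F. f (insert j (F - {i}))) =
    (\<Sum>F\<in>{F. F \<subseteq> U \<and> card F = k \<and> i \<notin> F}. \<Sum>j\<in>G \<inter> F. f F)"
proof -
  let ?A = "{F. F \<subseteq> U \<and> card F = k \<and> i \<in> F}" and ?B = "{F. F \<subseteq> U \<and> card F = k \<and> i \<notin> F}"
  have fin: "finite ?A" "finite ?B" "finite G"
    using U \<open>G \<subseteq> U\<close> by (auto intro: finite_subset[OF _ finite_subsets_card] finite_subset)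
  have "(\<Sum>F\<in>?A. \<Sum>j\<in>G - F. f (insert j (F - {i}))) =
      (\<Sum>(F, j)\<in>Sigma ?A (\<lambda>F. G - F). f (insert j (F - {i})))"
    using fin by (intro sum.Sigma) auto
  also have "\<dots> = (\<Sum>(F, j)\<in>Sigma ?B (\<lambda>F. G \<inter> F). f F)"
  proof -
    have card_pos: "F \<subseteq> U \<Longrightarrow> x \<in> F \<Longrightarrow> 0 < card F" for F x
      using U finite_subset card_gt_0_iff by blast
    show ?thesis
      by (rule sum.reindex_bij_witness[where i = "\<lambda>(F, j). (insert i (F - {j}), j)"
            and j = "\<lambda>(F, j). (insert j (F - {i}), j)"])
        (use assms in \<open>auto simp: finite_subset card_pos card_Diff_singleton\<close>)
  qed
  also have "\<dots> = (\<Sum>F\<in>?B. \<Sum>j\<in>G \<inter> F. f F)"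
    using fin by (intro sum.Sigma[symmetric]) auto
  finally show ?thesis .
qed

text \<open>Double counting: every F \<ni> i can trade i for at least card G - k elements j \<in> G - F, each
  trade loses at most a factor c, and each F' \<not>\<ni> i is reached by at most k trades.\<close>
lemma sum_prod_subsets_mem_le:
  fixes s :: "'a \<Rightarrow> real"
  assumes U: "finite U" and G: "G \<subseteq> U" "i \<in> G" "2 * k < card G"
    and nonneg: "\<And>x. x \<in> U \<Longrightarrow> 0 \<le> s x"
    and ratio: "\<And>j. j \<in> G \<Longrightarrow> s i \<le> c * s j" and "0 \<le> c"
  shows "(\<Sum>F\<in>{F. F \<subseteq> U \<and> card F = k \<and> i \<in> F}. prod s F)
    \<le> c * (\<Sum>F\<in>{F. F \<subseteq> U \<and> card F = k \<and> i \<notin> F}. prod s F)"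
proof -
  let ?A = "{F. F \<subseteq> U \<and> card F = k \<and> i \<in> F}" and ?B = "{F. F \<subseteq> U \<and> card F = k \<and> i \<notin> F}"
  define d where "d = card G - k"
  have "k < d" "k \<le> d" using G(3) by (auto simp: d_def)
  have prod_nonneg: "0 \<le> prod s F" if "F \<subseteq> U" for F
    using that nonneg by (auto intro: prod_nonneg)
  have trade: "prod s F \<le> c * prod s (insert j (F - {i}))" if "F \<in> ?A" "j \<in> G - F" for F j
  proof -
    have "finite F" using that U finite_subset by blast
    then have "prod s F = s i * prod s (F - {i})"
      and "prod s (insert j (F - {i})) = s j * prod s (F - {i})"
      using that by (auto simp: prod.remove)
    moreover have "s i * prod s (F - {i}) \<le> (c * s j) * prod s (F - {i})"
      using that ratio prod_nonneg[of "F - {i}"] by (intro mult_right_mono) auto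
    ultimately show ?thesis by (simp add: mult.assoc)
  qed
  have "real d * (\<Sum>F\<in>?A. prod s F) \<le> (\<Sum>F\<in>?A. \<Sum>j\<in>G - F. prod s F)"
    unfolding sum_distrib_left
  proof (intro sum_mono)
    fix F assume F: "F \<in> ?A"
    then have "d \<le> card (G - F)"
      using diff_card_le_card_Diff[of F G] U finite_subset by (auto simp: d_def)
    then show "real d * prod s F \<le> (\<Sum>j\<in>G - F. prod s F)"
      using F prod_nonneg by (auto intro: mult_right_mono)
  qed
  also have "\<dots> \<le> c * (\<Sum>F\<in>?A. \<Sum>j\<in>G - F. prod s (insert j (F - {i})))"
    unfolding sum_distrib_left using trade by (intro sum_mono) auto
  also have "\<dots> = c * (\<Sum>F\<in>?B. \<Sum>j\<in>G \<inter> F. prod s F)"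
    using U G by (subst sum_subsets_exchange) auto
  also have "\<dots> \<le> c * (real d * (\<Sum>F\<in>?B. prod s F))"
  proof (intro mult_left_mono \<open>0 \<le> c\<close>)
    have "(\<Sum>j\<in>G \<inter> F. prod s F) \<le> real d * prod s F" if F: "F \<in> ?B" for F
    proof -
      have "card (G \<inter> F) \<le> d"
        using F card_mono[of F "G \<inter> F"] U finite_subset \<open>k \<le> d\<close> by fastforce
      then show ?thesis using F prod_nonneg by (auto intro: mult_right_mono)
    qed
    then show "(\<Sum>F\<in>?B. \<Sum>j\<in>G \<inter> F. prod s F) \<le> real d * (\<Sum>F\<in>?B. prod s F)"
      unfolding sum_distrib_left by (rule sum_mono)
  qed
  finally show ?thesis using \<open>k < d\<close> by (simp add: mult.left_commute)
qed

lemma esym_Suc_lower_bound: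
  fixes s :: "'a \<Rightarrow> real"
  assumes U: "finite U" and nonneg: "\<And>x. x \<in> U \<Longrightarrow> 0 \<le> s x"
    and share: "\<And>i. i \<in> U \<Longrightarrow>
      (\<Sum>F\<in>{F. F \<subseteq> U \<and> card F = k \<and> i \<in> F}. prod s F) \<le> \<theta> * esym U k s"
  shows "(1 - \<theta>) * esym U k s * sum s U \<le> real (Suc k) * esym U (Suc k) s"
proof -
  let ?F = "{F. F \<subseteq> U \<and> card F = k}"
  have fin: "finite ?F" using U by (rule finite_subsets_card)
  have "(\<Sum>F\<in>?F. prod s F * sum s F) = (\<Sum>F\<in>?F. \<Sum>i\<in>{i \<in> U. i \<in> F}. prod s F * s i)"
    unfolding sum_distrib_left by (intro sum.cong) (auto intro: arg_cong[where f = "sum _"])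
  also have "\<dots> = (\<Sum>i\<in>U. s i * (\<Sum>F\<in>{F. F \<subseteq> U \<and> card F = k \<and> i \<in> F}. prod s F))"
    unfolding sum.swap_restrict[OF fin U] sum_distrib_left by (simp add: mult.commute)
  also have "\<dots> \<le> (\<Sum>i\<in>U. s i * (\<theta> * esym U k s))"
    using share nonneg by (intro sum_mono mult_left_mono) auto
  also have "\<dots> = \<theta> * esym U k s * sum s U"
    by (metis mult.commute sum_distrib_right)
  finally have mass_inside: "(\<Sum>F\<in>?F. prod s F * sum s F) \<le> \<theta> * esym U k s * sum s U" .
  have "real (Suc k) * esym U (Suc k) s = (\<Sum>F\<in>?F. \<Sum>l\<in>U - F. prod s F * s l)"
    using U by (rule of_nat_Suc_mult_esym_Suc)
  also have "\<dots> = (\<Sum>F\<in>?F. prod s F * sum s U - prod s F * sum s F)"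
    using U by (intro sum.cong refl) (auto simp: sum_diff right_diff_distrib sum_distrib_left[symmetric])
  also have "\<dots> = esym U k s * sum s U - (\<Sum>F\<in>?F. prod s F * sum s F)"
    by (simp add: esym_def sum_subtractf sum_distrib_right)
  finally show ?thesis using mass_inside by (simp add: left_diff_distrib)
qed

lemma sigmin_pos:
  assumes "1 \<le> n" and "\<And>i. i \<in> {1..n} \<Longrightarrow> 0 < s i"
  shows "0 < sigmin n s"
proof -
  have "Min (s ` {1..n}) \<in> s ` {1..n}" using assms(1) by (intro Min_in) auto
  then show ?thesis using assms(2) unfolding sigmin_def by auto
qed

lemma Grp_ratio_le:
  assumes "0 < sigmin n s" and i: "i \<in> Grp n s j" and l: "l \<in> Grp n s j"
  shows "s i \<le> 2 * s l"
proof -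
  have "2 ^ (j - 1) \<le> s i / sigmin n s" "s i / sigmin n s < 2 ^ j"
    and "2 ^ (j - 1) \<le> s l / sigmin n s"
    using i l by (auto simp: Grp_def)
  then have "s i / sigmin n s \<le> 2 * (s l / sigmin n s)"
    by (cases j) auto
  with assms(1) show ?thesis by (simp add: field_simps)
qed

lemma Gbig_subset: "Gbig n s m \<subseteq> {1..n}"
  unfolding Gbig_def Grp_def by auto

lemma finite_Gbig: "finite (Gbig n s m)"
  using Gbig_subset by (rule finite_subset) simp

lemma Gbig_share_le:
  assumes pos: "\<And>i. i \<in> {1..n} \<Longrightarrow> 0 < s i"
    and i: "i \<in> Gbig n s m" and "k \<le> m"
  shows "(\<Sum>F\<in>{F. F \<subseteq> Gbig n s m \<and> card F = k \<and> i \<in> F}. prod s F)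
    \<le> 2 / 3 * esym (Gbig n s m) k s"
proof -
  let ?U = "Gbig n s m"
  let ?A = "\<Sum>F\<in>{F. F \<subseteq> ?U \<and> card F = k \<and> i \<in> F}. prod s F"
    and ?B = "\<Sum>F\<in>{F. F \<subseteq> ?U \<and> card F = k \<and> i \<notin> F}. prod s F"
  obtain j where j: "Grp n s j \<subseteq> ?U" "i \<in> Grp n s j" "2 * m < card (Grp n s j)"
    using i unfolding Gbig_def by auto
  have "1 \<le> n" using i Gbig_subset by fastforce
  have "?A \<le> 2 * ?B"
  proof (rule sum_prod_subsets_mem_le[OF finite_Gbig j(1,2)])
    show "2 * k < card (Grp n s j)" using j(3) \<open>k \<le> m\<close> by linarith
    show "0 \<le> s x" if "x \<in> ?U" for x
      using that pos[of x] Gbig_subset by fastforce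
    show "s i \<le> 2 * s l" if "l \<in> Grp n s j" for l
      using sigmin_pos[OF \<open>1 \<le> n\<close> pos] j(2) that by (rule Grp_ratio_le)
  qed simp
  moreover have "esym ?U k s = ?A + ?B" using finite_Gbig by (rule esym_split_mem)
  ultimately show ?thesis by linarith
qed

lemma Gbig_card_gt:
  assumes "Gbig n s m \<noteq> {}"
  shows "2 * m < card (Gbig n s m)"
proof -
  obtain j where "Grp n s j \<subseteq> Gbig n s m" "2 * m < card (Grp n s j)"
    using assms unfolding Gbig_def by auto
  then show ?thesis using card_mono[OF finite_Gbig] by (metis order.strict_trans2)
qed

definition product_weights :: "'a set \<Rightarrow> nat \<Rightarrow> ('a \<Rightarrow> real) \<Rightarrow> 'a set \<Rightarrow> real" where
  "product_weights U k s F = (if F \<subseteq> U then prod s F / esym U k s else 0)"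

lemma feasible_product_weights:
  assumes U: "U \<subseteq> {1..n}" and "m - 1 \<le> card U" and pos: "\<And>i. i \<in> U \<Longrightarrow> 0 < s i"
  shows "feasible n m (product_weights U (m - 1) s)"
proof -
  let ?FN = "{F. F \<subseteq> {1..n} \<and> card F = m - 1}"
  have fin: "finite U" using U finite_subset by blast
  have Z_pos: "0 < esym U (m - 1) s" using fin assms(2) pos by (rule esym_pos)
  have "(\<Sum>F\<in>?FN. product_weights U (m - 1) s F) = (\<Sum>F\<in>{F \<in> ?FN. F \<subseteq> U}. prod s F / esym U (m - 1) s)"
    unfolding product_weights_def by (rule sum.inter_filter[symmetric, OF finite_subsets_card]) simp
  also have "{F \<in> ?FN. F \<subseteq> U} = {F. F \<subseteq> U \<and> card F = m - 1}" using U by blast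
  also have "(\<Sum>F\<in>\<dots>. prod s F / esym U (m - 1) s) = 1"
    using Z_pos by (simp add: esym_def sum_divide_distrib[symmetric])
  moreover have "0 \<le> product_weights U (m - 1) s F" for F
    using Z_pos pos by (auto simp: product_weights_def less_imp_le intro!: divide_nonneg_pos prod_nonneg)
  ultimately show ?thesis unfolding feasible_def by simp
qed

lemma objective_ge_sum_subsets:
  assumes feas: "feasible n m \<eta>" and "1 \<le> m" and pos: "\<And>i. i \<in> {1..n} \<Longrightarrow> 0 < s i"
    and U: "U \<subseteq> {1..n}"
  shows "(\<Sum>M\<in>{M. M \<subseteq> U \<and> card M = m}.
      (\<Sum>l\<in>M. \<eta> (M - {l}) * s l) * Ent M (\<lambda>l. \<eta> (M - {l}) * s l)) \<le> objective n m s \<eta>"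
  unfolding objective_def
proof (rule sum_mono2)
  show "finite {M. M \<subseteq> {1..n} \<and> card M = m}" by (simp add: finite_subsets_card)
  show "{M. M \<subseteq> U \<and> card M = m} \<subseteq> {M. M \<subseteq> {1..n} \<and> card M = m}" using U by auto
  fix M assume "M \<in> {M. M \<subseteq> {1..n} \<and> card M = m} - {M. M \<subseteq> U \<and> card M = m}"
  then have M: "M \<subseteq> {1..n}" "card M = m" by auto
  have "0 \<le> \<eta> (M - {l}) * s l" if "l \<in> M" for l
  proof -
    have "M - {l} \<subseteq> {1..n}" "card (M - {l}) = m - 1"
      using M that by (auto simp: card_Diff_singleton)
    then have "0 \<le> \<eta> (M - {l})" using feas unfolding feasible_def by blast
    moreover have "0 < s l" using that M pos by auto
    ultimately show ?thesis by simp
  qed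
  moreover have "finite M" using M finite_subset by blast
  ultimately show "0 \<le> (\<Sum>l\<in>M. \<eta> (M - {l}) * s l) * Ent M (\<lambda>l. \<eta> (M - {l}) * s l)"
    by (intro mass_mult_Ent_nonneg)
qed

lemma objective_nonneg:
  assumes "feasible n m \<eta>" and "1 \<le> m" and "\<And>i. i \<in> {1..n} \<Longrightarrow> 0 < s i"
  shows "0 \<le> objective n m s \<eta>"
  using objective_ge_sum_subsets[OF assms, where U = "{}"] \<open>1 \<le> m\<close> by simp

text \<open>Under product weights every m-subset M of U sees the constant vector
  prod s M / esym U (m - 1) s, so its entropy is ln m.\<close>
lemma objective_product_weights_ge:
  assumes "1 \<le> m" and U: "U \<subseteq> {1..n}" "m - 1 \<le> card U" and pos: "\<And>i. i \<in> {1..n} \<Longrightarrow> 0 < s i"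
  shows "real m * esym U m s / esym U (m - 1) s * ln (real m)
    \<le> objective n m s (product_weights U (m - 1) s)"
proof -
  let ?\<eta> = "product_weights U (m - 1) s" and ?Z = "esym U (m - 1) s"
  have pos_U: "\<And>i. i \<in> U \<Longrightarrow> 0 < s i" using U pos by auto
  have Z_pos: "0 < ?Z" using U finite_subset pos_U by (intro esym_pos) auto
  have subset_term: "(\<Sum>l\<in>M. ?\<eta> (M - {l}) * s l) * Ent M (\<lambda>l. ?\<eta> (M - {l}) * s l)
      = real m * prod s M / ?Z * ln (real m)" if M: "M \<subseteq> U" "card M = m" for M
  proof -
    have fin: "finite M" "M \<noteq> {}" using M \<open>1 \<le> m\<close> U(1) finite_subset[of M "{1..n}"] by auto
    have const: "?\<eta> (M - {l}) * s l = prod s M / ?Z" if "l \<in> M" for l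
      using M that fin by (auto simp: product_weights_def prod.remove mult.commute)
    have "Ent M (\<lambda>l. ?\<eta> (M - {l}) * s l) = Ent M (\<lambda>_. prod s M / ?Z)"
      using const by (rule Ent_cong)
    also have "\<dots> = ln (real m)"
    proof -
      have "0 < prod s M" using M pos_U by (intro prod_pos) auto
      then show ?thesis using Ent_const[OF fin] M Z_pos by simp
    qed
    finally show ?thesis using const M by simp
  qed
  have "real m * esym U m s / ?Z * ln (real m) =
      (\<Sum>M\<in>{M. M \<subseteq> U \<and> card M = m}. real m * prod s M / ?Z * ln (real m))"
    by (simp add: esym_def sum_distrib_left sum_distrib_right sum_divide_distrib)
  also have "\<dots> = (\<Sum>M\<in>{M. M \<subseteq> U \<and> card M = m}.
      (\<Sum>l\<in>M. ?\<eta> (M - {l}) * s l) * Ent M (\<lambda>l. ?\<eta> (M - {l}) * s l))"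
    using subset_term by (intro sum.cong) auto
  also have "\<dots> \<le> objective n m s ?\<eta>"
    using feasible_product_weights[OF U pos_U] assms(1) pos U(1) by (rule objective_ge_sum_subsets)
  finally show ?thesis .
qed

theorem lemma6:
  fixes n m :: nat and s :: "nat \<Rightarrow> real"
  assumes "1 \<le> m" and "m \<le> n"
    and "\<And>i. i \<in> {1..n} \<Longrightarrow> s i > 0"
  shows "\<exists>\<eta>. feasible n m \<eta> \<and>
           objective n m s \<eta> \<ge> (1/3) * (\<Sum>j \<in> Gbig n s m. s j) * ln (real m)"
proof (cases "Gbig n s m = {}")
  case True
  have "feasible n m (product_weights {1..n} (m - 1) s)"
    using assms by (intro feasible_product_weights) auto
  moreover have "0 \<le> objective n m s (product_weights {1..n} (m - 1) s)"
    using calculation assms(1,3) by (rule objective_nonneg)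
  ultimately show ?thesis using True by auto
next
  case False
  let ?U = "Gbig n s m"
  have U: "?U \<subseteq> {1..n}" "finite ?U" "m - 1 \<le> card ?U"
    using Gbig_subset finite_Gbig Gbig_card_gt[OF False] by auto
  have pos_U: "\<And>i. i \<in> ?U \<Longrightarrow> 0 < s i" using U(1) assms(3) by auto
  have Z_pos: "0 < esym ?U (m - 1) s" using U(2,3) pos_U by (rule esym_pos)
  have "(1 - 2 / 3) * esym ?U (m - 1) s * sum s ?U \<le> real (Suc (m - 1)) * esym ?U (Suc (m - 1)) s"
    using U(2) pos_U Gbig_share_le[OF assms(3)]
    by (intro esym_Suc_lower_bound) (auto simp: less_imp_le)
  then have "1 / 3 * sum s ?U \<le> real m * esym ?U m s / esym ?U (m - 1) s"
    using Z_pos \<open>1 \<le> m\<close> by (simp add: field_simps)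
  then have "1 / 3 * sum s ?U * ln (real m) \<le> real m * esym ?U m s / esym ?U (m - 1) s * ln (real m)"
    using \<open>1 \<le> m\<close> by (intro mult_right_mono) auto
  also have "\<dots> \<le> objective n m s (product_weights ?U (m - 1) s)"
    using assms(1) U(1,3) assms(3) by (rule objective_product_weights_ge)
  finally have "1 / 3 * sum s ?U * ln (real m) \<le> objective n m s (product_weights ?U (m - 1) s)" .
  moreover have "feasible n m (product_weights ?U (m - 1) s)"
    using U(1,3) pos_U by (rule feasible_product_weights)
  ultimately show ?thesis by blast
qed

end
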